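(* Let $K\subseteq\mathbb{R}^n$ be non-empty and closed. If $s=(s_\alpha)_{\alpha\in\mathbb{N}_0^n}$ is a $K^\sharp$-moment sequence, then $D(s)$ is a $K$-positivity preserver.
   Context: $D(s):=\sum_\alpha\frac{s_\alpha}{\alpha!}\partial^\alpha$ on $\mathbb{R}[x_1,\dots,x_n]$. $T$ is a $K$-positivity preserver if it maps polynomials non-negative on $K$ to polynomials non-negative on $K$. $K^\sharp:=\{x\in\mathbb{R}^n: x+K\subseteq K\}$. For closed $L$, $s$ is an $L$-moment sequence if $s_\alpha=\int x^\alpha\,\mathrm{d}\mu$ for all $\alpha$ for some measure $\mu$ with $\mathrm{supp}\,\mu\subseteq L$. *)

theory Defs
  imports "HOL-Analysis.Analysis"
begin

text \<open>Polynomials in n variables (n = CARD('n)) with real coefficients are represented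
by their coefficient functions on multi-indices \<alpha> :: 'n \<Rightarrow> nat with finite support.\<close>

definition monom_eval :: "('n::finite \<Rightarrow> nat) \<Rightarrow> real^'n \<Rightarrow> real" where
  "monom_eval \<alpha> x = (\<Prod>i\<in>UNIV. (x $ i) ^ (\<alpha> i))"

definition is_mpoly :: "(('n::finite \<Rightarrow> nat) \<Rightarrow> real) \<Rightarrow> bool" where
  "is_mpoly c \<longleftrightarrow> finite {\<alpha>. c \<alpha> \<noteq> 0}"

definition mpoly_eval :: "(('n::finite \<Rightarrow> nat) \<Rightarrow> real) \<Rightarrow> real^'n \<Rightarrow> real" where
  "mpoly_eval c x = (\<Sum>\<alpha>\<in>{\<alpha>. c \<alpha> \<noteq> 0}. c \<alpha> * monom_eval \<alpha> x)"

definition mfact :: "('n::finite \<Rightarrow> nat) \<Rightarrow> real" where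
  "mfact \<alpha> = (\<Prod>i\<in>UNIV. fact (\<alpha> i))"

text \<open>Partial derivative \<partial>^\<alpha> on coefficient functions:
  \<partial>^\<alpha> x^\<gamma> = \<gamma>!/(\<gamma>-\<alpha>)! x^(\<gamma>-\<alpha>) if \<alpha> \<le> \<gamma>, and 0 otherwise.\<close>
definition mpoly_deriv :: "('n::finite \<Rightarrow> nat) \<Rightarrow> (('n \<Rightarrow> nat) \<Rightarrow> real) \<Rightarrow> (('n \<Rightarrow> nat) \<Rightarrow> real)" where
  "mpoly_deriv \<alpha> c = (\<lambda>\<beta>. c (\<lambda>i. \<beta> i + \<alpha> i) * (\<Prod>i\<in>UNIV. fact (\<beta> i + \<alpha> i) / fact (\<beta> i)))"

text \<open>D(s) = \<Sum>_\<alpha> s_\<alpha>/\<alpha>! \<partial>^\<alpha>; on a polynomial only finitely many terms are nonzero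
  at each coefficient \<beta> (namely those with c(\<beta>+\<alpha>) \<noteq> 0).\<close>
definition Dop :: "(('n::finite \<Rightarrow> nat) \<Rightarrow> real) \<Rightarrow> (('n \<Rightarrow> nat) \<Rightarrow> real) \<Rightarrow> (('n \<Rightarrow> nat) \<Rightarrow> real)" where
  "Dop s c = (\<lambda>\<beta>. \<Sum>\<alpha>\<in>{\<alpha>. c (\<lambda>i. \<beta> i + \<alpha> i) \<noteq> 0}. s \<alpha> / mfact \<alpha> * mpoly_deriv \<alpha> c \<beta>)"

definition pos_preserver :: "(real^'n::finite) set \<Rightarrow> ((('n \<Rightarrow> nat) \<Rightarrow> real) \<Rightarrow> (('n \<Rightarrow> nat) \<Rightarrow> real)) \<Rightarrow> bool" where
  "pos_preserver K T \<longleftrightarrow>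
     (\<forall>c. is_mpoly c \<longrightarrow> (\<forall>x\<in>K. mpoly_eval c x \<ge> 0) \<longrightarrow> (\<forall>x\<in>K. mpoly_eval (T c) x \<ge> 0))"

definition sharp :: "(real^'n::finite) set \<Rightarrow> (real^'n) set" where
  "sharp K = {x. \<forall>k\<in>K. x + k \<in> K}"

definition measure_support :: "(real^'n::finite) measure \<Rightarrow> (real^'n) set" where
  "measure_support \<mu> = {x. \<forall>e>0. emeasure \<mu> (ball x e) > 0}"

definition is_moment_seq :: "(real^'n::finite) set \<Rightarrow> (('n \<Rightarrow> nat) \<Rightarrow> real) \<Rightarrow> bool" where
  "is_moment_seq L s \<longleftrightarrow>
     (\<exists>\<mu>. sets \<mu> = sets borel \<and> measure_support \<mu> \<subseteq> L \<and>
          (\<forall>\<alpha>. integrable \<mu> (monom_eval \<alpha>) \<and> s \<alpha> = integral\<^sup>L \<mu> (monom_eval \<alpha>)))"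

end

theory Submission
  imports Defs "HOL-Library.Function_Algebras"
begin

(* Taylor's formula c(x + y) = \<Sum>\<^sub>\<alpha> (\<partial>\<^sup>\<alpha> c)(x) y\<^sup>\<alpha> / \<alpha>! turns, after integrating in y
   against a representing measure \<mu> of s, into D(s)c(x) = \<integral> c(x + y) d\<mu>(y). For x \<in> K and
   y in the support of \<mu>, which lies in K\<^sup>\<sharp>, the point x + y lies in K; since \<mu> is concentrated
   on its support, the integrand is non-negative \<mu>-almost everywhere whenever c is non-negative
   on K. *)

definition mbinomial :: "('n::finite \<Rightarrow> nat) \<Rightarrow> ('n \<Rightarrow> nat) \<Rightarrow> real" where
  "mbinomial \<gamma> \<beta> = (\<Prod>i\<in>UNIV. real (\<gamma> i choose \<beta> i))"

definition mpoly_subindices :: "(('n::finite \<Rightarrow> nat) \<Rightarrow> real) \<Rightarrow> ('n \<Rightarrow> nat) set" where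
  "mpoly_subindices c = (\<Union>\<gamma>\<in>{\<gamma>. c \<gamma> \<noteq> 0}. {..\<gamma>})"

lemma PiE_atMost_eq_atMost_fun: "PiE UNIV (\<lambda>i. {..\<gamma> i}) = {..\<gamma>}"
  by (auto simp: PiE_def Pi_def extensional_def le_fun_def)

lemma finite_atMost_fun: "finite {..\<gamma> :: 'n::finite \<Rightarrow> nat}"
  by (simp flip: PiE_atMost_eq_atMost_fun add: finite_PiE)

lemma le_fun_add1: "\<beta> \<le> \<beta> + (\<alpha> :: 'a \<Rightarrow> nat)"
  and le_fun_add2: "\<alpha> \<le> \<beta> + (\<alpha> :: 'a \<Rightarrow> nat)"
  by (simp_all add: le_fun_def)

lemma le_fun_add_diff_inverse: "\<beta> \<le> \<gamma> \<Longrightarrow> \<beta> + (\<gamma> - \<beta>) = (\<gamma> :: 'a \<Rightarrow> nat)"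
  by (simp add: le_fun_def fun_eq_iff)

lemma finite_mpoly_subindices: "is_mpoly c \<Longrightarrow> finite (mpoly_subindices c)"
  by (simp add: mpoly_subindices_def is_mpoly_def finite_atMost_fun)

lemma mpoly_subindices_add:
  assumes "c (\<beta> + \<alpha>) \<noteq> 0"
  shows "\<beta> \<in> mpoly_subindices c" and "\<alpha> \<in> mpoly_subindices c"
  using assms le_fun_add1 le_fun_add2 unfolding mpoly_subindices_def by blast+

lemma monom_eval_add:
  "monom_eval \<gamma> (x + y) =
     (\<Sum>\<beta>\<in>{..\<gamma>}. mbinomial \<gamma> \<beta> * monom_eval \<beta> x * monom_eval (\<gamma> - \<beta>) y)"
proof -
  have "monom_eval \<gamma> (x + y) =
      (\<Prod>i\<in>UNIV. \<Sum>k\<le>\<gamma> i. real (\<gamma> i choose k) * (x $ i) ^ k * (y $ i) ^ (\<gamma> i - k))"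
    by (simp add: monom_eval_def binomial_ring)
  also have "\<dots> = (\<Sum>\<beta>\<in>PiE UNIV (\<lambda>i. {..\<gamma> i}).
      \<Prod>i\<in>UNIV. real (\<gamma> i choose \<beta> i) * (x $ i) ^ \<beta> i * (y $ i) ^ (\<gamma> i - \<beta> i))"
    by (rule prod_sum_PiE) auto
  also have "\<dots> = (\<Sum>\<beta>\<in>{..\<gamma>}. mbinomial \<gamma> \<beta> * monom_eval \<beta> x * monom_eval (\<gamma> - \<beta>) y)"
    unfolding PiE_atMost_eq_atMost_fun mbinomial_def monom_eval_def
    by (rule sum.cong[OF refl]) (simp add: prod.distrib)
  finally show ?thesis .
qed

lemma mpoly_eval_add:
  assumes "is_mpoly c"
  defines "A \<equiv> mpoly_subindices c"
  shows "mpoly_eval c (x + y) =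
    (\<Sum>\<beta>\<in>A. \<Sum>\<alpha>\<in>A. c (\<beta> + \<alpha>) * mbinomial (\<beta> + \<alpha>) \<beta> * monom_eval \<beta> x * monom_eval \<alpha> y)"
proof -
  define S where "S = {\<gamma>. c \<gamma> \<noteq> 0}"
  define g where "g \<beta> \<alpha> = c (\<beta> + \<alpha>) * mbinomial (\<beta> + \<alpha>) \<beta> * monom_eval \<beta> x * monom_eval \<alpha> y"
    for \<beta> \<alpha>
  have "mpoly_eval c (x + y) = (\<Sum>\<gamma>\<in>S. \<Sum>\<beta>\<in>{..\<gamma>}. g \<beta> (\<gamma> - \<beta>))"
    unfolding mpoly_eval_def S_def monom_eval_add sum_distrib_left
    by (intro sum.cong refl) (simp add: g_def le_fun_add_diff_inverse mult_ac)
  also have "\<dots> = (\<Sum>(\<gamma>, \<beta>)\<in>Sigma S atMost. g \<beta> (\<gamma> - \<beta>))"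
    using assms(1) by (intro sum.Sigma) (auto simp: S_def is_mpoly_def finite_atMost_fun)
  also have "\<dots> = (\<Sum>(\<beta>, \<alpha>)\<in>{(\<beta>, \<alpha>). c (\<beta> + \<alpha>) \<noteq> 0}. g \<beta> \<alpha>)"
    by (rule sum.reindex_bij_witness[where i = "\<lambda>(\<beta>, \<alpha>). (\<beta> + \<alpha>, \<beta>)"
          and j = "\<lambda>(\<gamma>, \<beta>). (\<beta>, \<gamma> - \<beta>)"])
       (auto simp: S_def le_fun_add_diff_inverse le_fun_add1)
  also have "\<dots> = (\<Sum>(\<beta>, \<alpha>)\<in>A \<times> A. g \<beta> \<alpha>)"
    using assms by (intro sum.mono_neutral_left)
      (auto simp: finite_mpoly_subindices mpoly_subindices_add g_def)
  finally show ?thesis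
    by (simp add: sum.cartesian_product g_def)
qed

lemma mpoly_deriv_div_mfact:
  "mpoly_deriv \<alpha> c \<beta> / mfact \<alpha> = c (\<beta> + \<alpha>) * mbinomial (\<beta> + \<alpha>) \<beta>"
proof -
  have "(\<Prod>i\<in>UNIV. fact (\<beta> i + \<alpha> i) / fact (\<beta> i)) / mfact \<alpha> = mbinomial (\<beta> + \<alpha>) \<beta>"
    by (simp add: mfact_def mbinomial_def binomial_fact prod_dividef flip: prod.distrib)
  moreover have "mpoly_deriv \<alpha> c \<beta> / mfact \<alpha> =
      c (\<beta> + \<alpha>) * ((\<Prod>i\<in>UNIV. fact (\<beta> i + \<alpha> i) / fact (\<beta> i)) / mfact \<alpha>)"
    by (simp add: mpoly_deriv_def plus_fun_def)
  ultimately show ?thesis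
    by simp
qed

lemma mpoly_eval_Dop:
  assumes "is_mpoly c"
  defines "A \<equiv> mpoly_subindices c"
  shows "mpoly_eval (Dop s c) x =
    (\<Sum>\<beta>\<in>A. \<Sum>\<alpha>\<in>A. s \<alpha> * (c (\<beta> + \<alpha>) * mbinomial (\<beta> + \<alpha>) \<beta> * monom_eval \<beta> x))"
proof -
  have finA: "finite A"
    using assms by (simp add: finite_mpoly_subindices)
  have Dop_coeff: "Dop s c \<beta> = (\<Sum>\<alpha>\<in>A. s \<alpha> * (c (\<beta> + \<alpha>) * mbinomial (\<beta> + \<alpha>) \<beta>))" for \<beta>
  proof -
    have "Dop s c \<beta> = (\<Sum>\<alpha>\<in>{\<alpha>. c (\<beta> + \<alpha>) \<noteq> 0}. s \<alpha> * (mpoly_deriv \<alpha> c \<beta> / mfact \<alpha>))"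
      by (simp add: Dop_def plus_fun_def)
    also have "\<dots> = (\<Sum>\<alpha>\<in>A. s \<alpha> * (mpoly_deriv \<alpha> c \<beta> / mfact \<alpha>))"
      using finA by (intro sum.mono_neutral_left)
        (auto simp: A_def mpoly_subindices_add mpoly_deriv_div_mfact)
    finally show ?thesis
      by (simp add: mpoly_deriv_div_mfact)
  qed
  have "\<beta> \<in> A" if "Dop s c \<beta> \<noteq> 0" for \<beta>
    using that unfolding Dop_coeff
    by (rule sum.not_neutral_contains_not_neutral) (auto simp: A_def mpoly_subindices_add)
  then have "mpoly_eval (Dop s c) x = (\<Sum>\<beta>\<in>A. Dop s c \<beta> * monom_eval \<beta> x)"
    unfolding mpoly_eval_def using finA by (intro sum.mono_neutral_left) auto
  then show ?thesis
    by (simp add: Dop_coeff sum_distrib_left sum_distrib_right mult_ac)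
qed

lemma mpoly_eval_Dop_moments:
  assumes "is_mpoly c"
    and monom_integrable: "\<And>\<alpha>. integrable \<mu> (monom_eval \<alpha>)"
    and moments: "\<And>\<alpha>. s \<alpha> = (\<integral>y. monom_eval \<alpha> y \<partial>\<mu>)"
  shows "mpoly_eval (Dop s c) x = (\<integral>y. mpoly_eval c (x + y) \<partial>\<mu>)"
proof -
  define A where "A = mpoly_subindices c"
  define t where "t \<beta> \<alpha> = c (\<beta> + \<alpha>) * mbinomial (\<beta> + \<alpha>) \<beta> * monom_eval \<beta> x" for \<beta> \<alpha>
  have "mpoly_eval (Dop s c) x = (\<Sum>\<beta>\<in>A. \<Sum>\<alpha>\<in>A. s \<alpha> * t \<beta> \<alpha>)"
    using assms(1) by (simp add: mpoly_eval_Dop A_def t_def)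
  also have "\<dots> = (\<Sum>\<beta>\<in>A. \<Sum>\<alpha>\<in>A. \<integral>y. t \<beta> \<alpha> * monom_eval \<alpha> y \<partial>\<mu>)"
    by (simp add: moments mult.commute)
  also have "\<dots> = (\<integral>y. (\<Sum>\<beta>\<in>A. \<Sum>\<alpha>\<in>A. t \<beta> \<alpha> * monom_eval \<alpha> y) \<partial>\<mu>)"
    by (simp add: monom_integrable)
  also have "\<dots> = (\<integral>y. mpoly_eval c (x + y) \<partial>\<mu>)"
    using assms(1) by (simp add: mpoly_eval_add A_def t_def)
  finally show ?thesis .
qed

lemma AE_in_measure_support:
  assumes "sets \<mu> = sets borel"
  shows "AE y in \<mu>. y \<in> measure_support \<mu>"
proof -
  define F where "F = {ball x e | x e. e > 0 \<and> emeasure \<mu> (ball x e) = 0}"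
  obtain F' where F': "F' \<subseteq> F" "countable F'" "\<Union>F' = \<Union>F"
    using Lindelof[of F] unfolding F_def by blast
  have "S \<in> null_sets \<mu>" if "S \<in> F" for S
    using that assms unfolding F_def by auto
  then have "(\<Union>S\<in>F'. S) \<in> null_sets \<mu>"
    using F'(1,2) by (intro null_sets_UN') auto
  then have "AE y in \<mu>. y \<notin> \<Union>F"
    using F'(3) by (intro AE_not_in) simp
  moreover have "y \<in> measure_support \<mu>" if "y \<notin> \<Union>F" for y
  proof -
    have "ball y e \<notin> F" if "e > 0" for e
      using \<open>y \<notin> \<Union>F\<close> \<open>e > 0\<close> by auto
    then show ?thesis
      unfolding measure_support_def F_def by (force simp: zero_less_iff_neq_zero)
  qed
  ultimately show ?thesis
    by (auto elim: AE_mp)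
qed

theorem lemma4p10:
  fixes K :: "(real^'n::finite) set" and s :: "('n \<Rightarrow> nat) \<Rightarrow> real"
  assumes "K \<noteq> {}" and "closed K"
    and "is_moment_seq (sharp K) s"
  shows "pos_preserver K (Dop s)"
  unfolding pos_preserver_def
proof (intro allI impI ballI)
  fix c :: "('n \<Rightarrow> nat) \<Rightarrow> real" and x
  assume c: "is_mpoly c" and nonneg: "\<forall>x\<in>K. 0 \<le> mpoly_eval c x" and "x \<in> K"
  obtain \<mu> where \<mu>: "sets \<mu> = sets borel" "measure_support \<mu> \<subseteq> sharp K"
    "\<And>\<alpha>. integrable \<mu> (monom_eval \<alpha>)" "\<And>\<alpha>. s \<alpha> = (\<integral>y. monom_eval \<alpha> y \<partial>\<mu>)"
    using assms(3) unfolding is_moment_seq_def by blast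
  have "AE y in \<mu>. 0 \<le> mpoly_eval c (x + y)"
    using AE_in_measure_support[OF \<mu>(1)]
  proof (rule AE_mp, intro AE_I2 impI)
    fix y assume "y \<in> measure_support \<mu>"
    with \<mu>(2) \<open>x \<in> K\<close> have "x + y \<in> K"
      unfolding sharp_def by (auto simp: add.commute)
    then show "0 \<le> mpoly_eval c (x + y)"
      using nonneg by blast
  qed
  then show "0 \<le> mpoly_eval (Dop s c) x"
    unfolding mpoly_eval_Dop_moments[OF c \<mu>(3,4)] by (rule integral_nonneg_AE)
qed

end
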